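(* Let a project have finite state space $\mathbb{X}$, transition probabilities $p(i,j)$, active rewards $R(i)$, discount factor $0<\beta\le1$ and horizon $T$. For a tuple $A=(A_1,\dots,A_T)$ of subsets of $\mathbb{X}$ and $1\le d\le T$, $i\in\mathbb{X}$, let $f_d^A(i)$ be the expected total discounted reward $\mathsf{E}_i[\sum_{t=0}^{\tau-1}\beta^tR(X(t))]$ earned starting in state $i$ with $d$ remaining periods under the stopping rule $\tau$ that, at time $t<d$ (when $d-t$ periods remain) engages the project iff $X(t)\in A_{d-t}$, and stops at the first time this fails or when $t=d$; and let $r_d^A(i)=f_d^{A\cup\{(d,i)\}}(i)$, where $A\cup\{(s,j)\}$ denotes the tuple obtained from $A$ by replacing $A_s$ with $A_s\cup\{j\}$. Let $A$ satisfy $A_1\subseteq A_2\subseteq\dots\subseteq A_T\subseteq\mathbb{X}$. Then for $1\le d\le T$ and $i\in\mathbb{X}$: (a) $r_d^A(i)=R(i)+\beta\sum_{j\in A_{d-1}}p(i,j)r_{d-1}^A(j)$ if $2\le d\le T$, and $r_1^A(i)=R(i)$. (b) $r_d^{A\cup\{(d,i^* )\}}(i)=r_d^A(i)$ for $i^*\in\mathbb{X}\setminus A_d$. (c) $r_d^{A\cup\{(d-1,i^* )\}}(i)=r_d^A(i)+\beta p(i,i^* )r_{d-1}^A(i^* )$ for $i^*\in A_d\setminus A_{d-1}$ (with $d\ge 2$). (d) $r_d^{A\cup\{(s,i^* )\}}(i)=R(i)+\beta\sum_{j\in A_{d-1}}p(i,j)r_{d-1}^{A\cup\{(s,i^* )\}}(j)$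 for $1\le s\le d-2$ and $i^*\in A_{s+1}\setminus A_s$.
   Context: $r_d^A(i)$ is the modified reward measure: the reward measure of the stopping rule with continuation sets $A$, modified so that the project is engaged at least at time 0 in state $i$ with $d$ periods remaining. *)

theory Defs
  imports Complex_Main
begin

text \<open>The stopping rule with continuation sets A (A k used when k periods
 remain) engages at time t < d iff X(t) \<in> A (d - t).  The expected discounted
 reward E_i[sum_{t<tau} beta^t R(X t)] is written out as the sum over t of
 beta^t E_i[1{tau > t} R(X t)], the expectation being a finite sum over paths.\<close>

definition path_set :: "'a set \<Rightarrow> nat \<Rightarrow> 'a list set" where
  "path_set S t = {xs. set xs \<subseteq> S \<and> length xs = t}"

definition fval :: "'a set \<Rightarrow> ('a \<Rightarrow> 'a \<Rightarrow> real) \<Rightarrow> ('a \<Rightarrow> real) \<Rightarrow> real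
    \<Rightarrow> (nat \<Rightarrow> 'a set) \<Rightarrow> nat \<Rightarrow> 'a \<Rightarrow> real" where
  "fval S p R \<beta> A d i =
     (\<Sum>t<d. \<beta> ^ t * (\<Sum>xs\<in>path_set S t.
        (let x = i # xs in
          (if (\<forall>s\<le>t. x ! s \<in> A (d - s))
           then (\<Prod>s<t. p (x ! s) (x ! Suc s)) * R (x ! t) else 0))))"

definition upd :: "(nat \<Rightarrow> 'a set) \<Rightarrow> nat \<Rightarrow> 'a \<Rightarrow> (nat \<Rightarrow> 'a set)" where
  "upd A s j = A(s := A s \<union> {j})"

definition rval :: "'a set \<Rightarrow> ('a \<Rightarrow> 'a \<Rightarrow> real) \<Rightarrow> ('a \<Rightarrow> real) \<Rightarrow> real
    \<Rightarrow> (nat \<Rightarrow> 'a set) \<Rightarrow> nat \<Rightarrow> 'a \<Rightarrow> real" where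
  "rval S p R \<beta> A d i = fval S p R \<beta> (upd A d i) d i"

end

theory Submission
  imports Defs
begin

text \<open>Conditioning on the first transition turns the path sum defining f into the Bellman
 recursion  f_{n+1}(i) = [i \<in> A_{n+1}] (R i + \<beta> \<Sum>_j p i j f_n(j)),  and by induction f_n depends
 only on A_1, ..., A_n.  Hence  r_{n+1}(i) = R i + \<beta> \<Sum>_j p i j f_n(j),  and since f_n equals r_n on
 A_n and vanishes off it, this is (a).  Part (b) holds because r_{n+1} does not see A_{n+1} at all;
 adding i* to A_n changes f_n only at i*, where it becomes r_n(i*), giving (c); and a change at a
 level s < n leaves A_n untouched, so (a) for the modified tuple is (d).  The argument is purely
 algebraic: only finiteness of the state space is used, not stochasticity of p nor the bounds on \<beta>.\<close>

definition path_reward ::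
    "('a \<Rightarrow> 'a \<Rightarrow> real) \<Rightarrow> ('a \<Rightarrow> real) \<Rightarrow> (nat \<Rightarrow> 'a set) \<Rightarrow> nat \<Rightarrow> 'a list \<Rightarrow> nat \<Rightarrow> real" where
  "path_reward p R A d x t =
     (if \<forall>s\<le>t. x ! s \<in> A (d - s) then (\<Prod>s<t. p (x ! s) (x ! Suc s)) * R (x ! t) else 0)"

lemma fval_eq_path_reward:
  "fval S p R \<beta> A d i = (\<Sum>t<d. \<beta> ^ t * (\<Sum>xs\<in>path_set S t. path_reward p R A d (i # xs) t))"
  by (simp add: fval_def path_reward_def Let_def)

lemma path_reward_Nil: "path_reward p R A d [i] 0 = (if i \<in> A d then R i else 0)"
  by (simp add: path_reward_def)

lemma path_reward_Cons_Suc: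
  "path_reward p R A (Suc n) (i # j # ys) (Suc t) =
     (if i \<in> A (Suc n) then p i j * path_reward p R A n (j # ys) t else 0)"
proof -
  have engaged: "(\<forall>s\<le>Suc t. (i # j # ys) ! s \<in> A (Suc n - s))
      \<longleftrightarrow> i \<in> A (Suc n) \<and> (\<forall>s\<le>t. (j # ys) ! s \<in> A (n - s))"
    by (simp only: less_Suc_eq_le[symmetric] All_less_Suc2) simp
  moreover have weight: "(\<Prod>s<Suc t. p ((i # j # ys) ! s) ((i # j # ys) ! Suc s))
      = p i j * (\<Prod>s<t. p ((j # ys) ! s) ((j # ys) ! Suc s))"
    by (simp only: prod.lessThan_Suc_shift nth_Cons_0 nth_Cons_Suc)
  ultimately show ?thesis
    unfolding path_reward_def engaged weight by auto
qed

lemma path_set_0: "path_set S 0 = {[]}"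
  by (auto simp: path_set_def)

lemma path_set_Suc: "path_set S (Suc t) = (\<lambda>(j, ys). j # ys) ` (S \<times> path_set S t)"
  by (auto simp: path_set_def length_Suc_conv image_iff)

lemma sum_path_set_Suc:
  "(\<Sum>xs\<in>path_set S (Suc t). h xs) = (\<Sum>j\<in>S. \<Sum>ys\<in>path_set S t. h (j # ys))"
  by (simp add: path_set_Suc sum.reindex inj_on_def sum.cartesian_product case_prod_unfold)

lemma upd_same: "k \<in> upd A s j s \<longleftrightarrow> k = j \<or> k \<in> A s"
  by (simp add: upd_def)

lemma upd_other: "t \<noteq> s \<Longrightarrow> upd A s j t = A t"
  by (simp add: upd_def)

lemma fval_0 [simp]: "fval S p R \<beta> A 0 i = 0"
  by (simp add: fval_def)

lemma fval_Suc:
  "fval S p R \<beta> A (Suc n) i =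
     (if i \<in> A (Suc n) then R i + \<beta> * (\<Sum>j\<in>S. p i j * fval S p R \<beta> A n j) else 0)"
proof -
  let ?w = "path_reward p R A"
  have "fval S p R \<beta> A (Suc n) i = (if i \<in> A (Suc n) then R i else 0)
      + (\<Sum>t<n. \<beta> ^ Suc t * (\<Sum>j\<in>S. \<Sum>ys\<in>path_set S t. ?w (Suc n) (i # j # ys) (Suc t)))"
    unfolding fval_eq_path_reward sum.lessThan_Suc_shift sum_path_set_Suc
    by (simp add: path_set_0 path_reward_Nil)
  also have "\<dots> = (if i \<in> A (Suc n) then R i + \<beta> * (\<Sum>j\<in>S. p i j * fval S p R \<beta> A n j) else 0)"
  proof (cases "i \<in> A (Suc n)")
    case True
    then have "(\<Sum>t<n. \<beta> ^ Suc t * (\<Sum>j\<in>S. \<Sum>ys\<in>path_set S t. ?w (Suc n) (i # j # ys) (Suc t)))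
        = (\<Sum>t<n. \<Sum>j\<in>S. \<beta> * (p i j * (\<beta> ^ t * (\<Sum>ys\<in>path_set S t. ?w n (j # ys) t))))"
      by (simp add: path_reward_Cons_Suc sum_distrib_left mult_ac)
    also have "\<dots> = \<beta> * (\<Sum>j\<in>S. p i j * fval S p R \<beta> A n j)"
      by (simp add: fval_eq_path_reward sum_distrib_left sum.swap[of _ "{..<n}"])
    finally show ?thesis
      using True by simp
  qed (simp add: path_reward_Cons_Suc)
  finally show ?thesis .
qed

lemma fval_cong_levels:
  assumes "\<And>k. 1 \<le> k \<Longrightarrow> k \<le> n \<Longrightarrow> A k = B k"
  shows "fval S p R \<beta> A n i = fval S p R \<beta> B n i"
  using assms by (induction n arbitrary: i) (simp_all add: fval_Suc)

lemma fval_upd_above: "n < s \<Longrightarrow> fval S p R \<beta> (upd A s j) n i = fval S p R \<beta> A n i"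
  by (rule fval_cong_levels) (simp add: upd_other)

lemma fval_eq_rval: "i \<in> A d \<Longrightarrow> fval S p R \<beta> A d i = rval S p R \<beta> A d i"
  by (simp add: rval_def upd_def insert_absorb)

lemma fval_eq_0: "i \<notin> A d \<Longrightarrow> fval S p R \<beta> A d i = 0"
  by (cases d) (simp_all add: fval_Suc)

lemma rval_Suc: "rval S p R \<beta> A (Suc n) i = R i + \<beta> * (\<Sum>j\<in>S. p i j * fval S p R \<beta> A n j)"
  unfolding rval_def fval_Suc fval_upd_above[OF lessI] by (simp add: upd_same)

lemma rval_1: "rval S p R \<beta> A 1 i = R i"
  using rval_Suc[of S p R \<beta> A 0 i] by simp

lemma rval_Suc_restrict:
  assumes "finite S" "A n \<subseteq> S"
  shows "rval S p R \<beta> A (Suc n) i = R i + \<beta> * (\<Sum>j\<in>A n. p i j * rval S p R \<beta> A n j)"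
proof -
  have "(\<Sum>j\<in>S. p i j * fval S p R \<beta> A n j)
      = (\<Sum>j\<in>S. if j \<in> A n then p i j * rval S p R \<beta> A n j else 0)"
    by (rule sum.cong) (auto simp: fval_eq_rval fval_eq_0)
  also have "\<dots> = (\<Sum>j\<in>A n. p i j * rval S p R \<beta> A n j)"
    using assms by (simp add: sum.inter_restrict[symmetric] Int_absorb1)
  finally show ?thesis
    by (simp add: rval_Suc)
qed

lemma rval_upd_same_level: "rval S p R \<beta> (upd A d j) d i = rval S p R \<beta> A d i"
proof (cases d)
  case 0
  then show ?thesis
    by (simp add: rval_def)
next
  case (Suc n)
  then show ?thesis
    by (simp add: rval_Suc fval_upd_above)
qed

lemma fval_upd_top:
  assumes "j \<notin> A n"
  shows "fval S p R \<beta> (upd A n j) n k = fval S p R \<beta> A n k + (if k = j then rval S p R \<beta> A n j else 0)"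
proof (cases "k = j")
  case True
  then show ?thesis
    using assms by (simp add: rval_def fval_eq_0)
next
  case False
  then show ?thesis
    by (cases n) (simp_all add: fval_Suc fval_upd_above upd_same)
qed

lemma rval_upd_prev_level:
  assumes "finite S" "j \<in> S" "j \<notin> A n"
  shows "rval S p R \<beta> (upd A n j) (Suc n) i
    = rval S p R \<beta> A (Suc n) i + \<beta> * p i j * rval S p R \<beta> A n j"
proof -
  have "(\<Sum>k\<in>S. p i k * fval S p R \<beta> (upd A n j) n k)
      = (\<Sum>k\<in>S. p i k * fval S p R \<beta> A n k) + (\<Sum>k\<in>S. if k = j then p i j * rval S p R \<beta> A n j else 0)"
    using assms(3) by (simp add: fval_upd_top distrib_left sum.distrib[symmetric] if_distrib cong: if_cong)
  also have "\<dots> = (\<Sum>k\<in>S. p i k * fval S p R \<beta> A n k) + p i j * rval S p R \<beta> A n j"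
    using assms(1,2) by simp
  finally show ?thesis
    by (simp add: rval_Suc algebra_simps)
qed

lemma subset_top_of_chain:
  assumes "\<And>k. 1 \<le> k \<Longrightarrow> k < T \<Longrightarrow> A k \<subseteq> A (Suc k)" "1 \<le> k" "k \<le> T"
  shows "A k \<subseteq> A T"
  using assms(3)
proof (induction rule: inc_induct)
  case (step n)
  then have "A n \<subseteq> A (Suc n)"
    using assms(1,2) by simp
  with step show ?case
    by blast
qed simp

theorem lemma1:
  fixes S :: "'a set" and p :: "'a \<Rightarrow> 'a \<Rightarrow> real" and R :: "'a \<Rightarrow> real"
    and \<beta> :: real and T :: nat and A :: "nat \<Rightarrow> 'a set" and d :: nat and i :: 'a
  assumes finS: "finite S"
    and p_nonneg: "\<And>x y. x \<in> S \<Longrightarrow> y \<in> S \<Longrightarrow> 0 \<le> p x y"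
    and p_stoch: "\<And>x. x \<in> S \<Longrightarrow> (\<Sum>y\<in>S. p x y) = 1"
    and beta: "0 < \<beta>" "\<beta> \<le> 1"
    and mono: "\<And>k. 1 \<le> k \<Longrightarrow> k < T \<Longrightarrow> A k \<subseteq> A (Suc k)"
    and AT: "A T \<subseteq> S"
    and d: "1 \<le> d" "d \<le> T"
    and i: "i \<in> S"
  shows "((2 \<le> d \<longrightarrow> rval S p R \<beta> A d i
              = R i + \<beta> * (\<Sum>j\<in>A (d - 1). p i j * rval S p R \<beta> A (d - 1) j))
          \<and> rval S p R \<beta> A 1 i = R i)
       \<and> (\<forall>i'\<in>S - A d. rval S p R \<beta> (upd A d i') d i = rval S p R \<beta> A d i)
       \<and> (2 \<le> d \<longrightarrow> (\<forall>i'\<in>A d - A (d - 1).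
            rval S p R \<beta> (upd A (d - 1) i') d i
              = rval S p R \<beta> A d i + \<beta> * p i i' * rval S p R \<beta> A (d - 1) i'))
       \<and> (\<forall>s. 1 \<le> s \<and> s \<le> d - 2 \<longrightarrow> (\<forall>i'\<in>A (Suc s) - A s.
            rval S p R \<beta> (upd A s i') d i
              = R i + \<beta> * (\<Sum>j\<in>A (d - 1). p i j * rval S p R \<beta> (upd A s i') (d - 1) j)))"
proof -
  have A_sub_S: "A k \<subseteq> S" if "1 \<le> k" "k \<le> T" for k
    using subset_top_of_chain[of T A k, OF mono that] AT by blast
  obtain n where n: "d = Suc n"
    using d by (cases d) auto
  have An_sub_S: "A n \<subseteq> S" if "2 \<le> d"
    using A_sub_S[of n] that n d by simp
  have Ad_sub_S: "A d \<subseteq> S"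
    using A_sub_S d by simp
  show ?thesis
  proof (intro conjI impI allI ballI)
    show "rval S p R \<beta> A 1 i = R i"
      by (rule rval_1)
    show "rval S p R \<beta> A d i = R i + \<beta> * (\<Sum>j\<in>A (d - 1). p i j * rval S p R \<beta> A (d - 1) j)"
      if "2 \<le> d"
      using rval_Suc_restrict[of S A n, OF finS An_sub_S[OF that]] n by simp
    show "rval S p R \<beta> (upd A d i') d i = rval S p R \<beta> A d i" for i'
      by (rule rval_upd_same_level)
    show "rval S p R \<beta> (upd A (d - 1) i') d i
        = rval S p R \<beta> A d i + \<beta> * p i i' * rval S p R \<beta> A (d - 1) i'"
      if "i' \<in> A d - A (d - 1)" for i'
      using rval_upd_prev_level[OF finS, of i' A n] that Ad_sub_S n by auto
    show "rval S p R \<beta> (upd A s i') d i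
        = R i + \<beta> * (\<Sum>j\<in>A (d - 1). p i j * rval S p R \<beta> (upd A s i') (d - 1) j)"
      if "1 \<le> s \<and> s \<le> d - 2" for s i'
    proof -
      have "2 \<le> d"
        using that by linarith
      then have "upd A s i' n = A n" "A n \<subseteq> S"
        using An_sub_S that n by (auto simp: upd_other)
      then show ?thesis
        using rval_Suc_restrict[of S "upd A s i'" n, OF finS] n by simp
    qed
  qed
qed

end
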